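(* Let $X$ be a metrically strictly systolic complex. Then there is a weight function $w$ on the corners of the 2-simplices of $X$ making $(X,w)$ a strictly systolic angled complex.
   Context: A quasi-simplicial complex is a simplicial complex in which multiple edges between two vertices are allowed, but no loops and no 2-simplices with two or more edges in common; complexes are locally finite. It is 3-flag if whenever it contains three faces of a tetrahedron it contains the whole tetrahedron. For a vertex $v$, $\mathrm{lk}(v)$ is the geometric link of $v$ in the 2-skeleton (a graph with a vertex for each edge at $v$ and an edge for each corner at $v$ of a 2-simplex). A metrically strictly systolic complex is a simply connected 3-flag quasi-simplicial complex $X$ whose 2-skeleton carries a piecewise Euclidean metric with finitely many isometry classes of simplices, such that, assigning to each edge of each vertex link the Euclidean angle of the corresponding corner (the angular distance), (a) the weak triangle inequality holds: for every vertex $v$ and edges $\alpha_{12},\alpha_{23},\alpha_{13}$ of $\mathrm{lk}(v)$ with $\alpha_{ij}$ from $v_i$ to $v_j$, the angle of $\alpha_{13}$ is at most the sum of the angles of $\alpha_{12}$ and $\alpha_{23}$; and (b) every 2-full cycle in every vertex link has angular length (sum of angles of its edges) strictly greater than $2\pi$. Here a simple cycle of length $>3$ in $\mathrm{lk}(v)$ is 2-full if no edge of $\mathrm{lk}(v)$ joins two vertices of the cycle having a common neighbour in the cycle. An angled complex is a quasi-simplicial complex $X$ with a weight function $w$ assigning a nonnegative real number to each corner of each 2-simplex, with finite image, satisfying the weak triangle inequality as in (a) with $w$ in place of angles. It is locally $2\pi$-large if every 2-full cycle in every vertex link has $w$-length $\geq 2\pi$. A strictly systolic angled complex is a simply connected,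 locally $2\pi$-large, 3-flag angled complex in which the sum of the three weights of each 2-simplex is $<\pi$. *)

theory Defs
  imports Complex_Main
begin

text \<open>Multiple edges with the same ends are allowed.\<close>

record ('v,'e,'t,'q) qcomplex =
  Vs :: "'v set"
  Es :: "'e set"
  Ts :: "'t set"
  Qs :: "'q set"
  ends :: "'e \<Rightarrow> 'v set"
  tedges :: "'t \<Rightarrow> 'e set"
  qtris :: "'q \<Rightarrow> 't set"

definition tri_verts :: "('v,'e,'t,'q) qcomplex \<Rightarrow> 't \<Rightarrow> 'v set" where
  "tri_verts X t = \<Union> (ends X ` tedges X t)"

definition tet_verts :: "('v,'e,'t,'q) qcomplex \<Rightarrow> 'q \<Rightarrow> 'v set" where
  "tet_verts X q = \<Union> (tri_verts X ` qtris X q)"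

definition is_tri :: "('v,'e,'t,'q) qcomplex \<Rightarrow> 't \<Rightarrow> 'v \<Rightarrow> 'v \<Rightarrow> 'v \<Rightarrow> 'e \<Rightarrow> 'e \<Rightarrow> 'e \<Rightarrow> bool" where
  "is_tri X t a b c e1 e2 e3 \<longleftrightarrow>
     a \<noteq> b \<and> b \<noteq> c \<and> a \<noteq> c \<and> t \<in> Ts X \<and>
     e1 \<in> Es X \<and> e2 \<in> Es X \<and> e3 \<in> Es X \<and>
     ends X e1 = {a, b} \<and> ends X e2 = {b, c} \<and> ends X e3 = {a, c} \<and>
     tedges X t = {e1, e2, e3}"

definition three_faces ::
  "('v,'e,'t,'q) qcomplex \<Rightarrow> 'v \<Rightarrow> 'v \<Rightarrow> 'v \<Rightarrow> 'v \<Rightarrow>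
   'e \<Rightarrow> 'e \<Rightarrow> 'e \<Rightarrow> 'e \<Rightarrow> 'e \<Rightarrow> 'e \<Rightarrow> 't \<Rightarrow> 't \<Rightarrow> 't \<Rightarrow> bool" where
  "three_faces X v a b c eva evb evc eab ebc eac t1 t2 t3 \<longleftrightarrow>
     distinct [v, a, b, c] \<and>
     is_tri X t1 v a b eva eab evb \<and>
     is_tri X t2 v b c evb ebc evc \<and>
     is_tri X t3 v a c eva eac evc"

definition quasi_simplicial :: "('v,'e,'t,'q) qcomplex \<Rightarrow> bool" where
  "quasi_simplicial X \<longleftrightarrow>
     \<comment> \<open>edges: no loops, ends are vertices\<close>
     (\<forall>e\<in>Es X. card (ends X e) = 2 \<and> ends X e \<subseteq> Vs X) \<and>
     \<comment> \<open>2-simplices are triangles with three distinct vertices\<close>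
     (\<forall>t\<in>Ts X. \<exists>a b c e1 e2 e3. is_tri X t a b c e1 e2 e3) \<and>
     \<comment> \<open>3-simplices are tetrahedra bounded by four 2-simplices\<close>
     (\<forall>q\<in>Qs X. \<exists>v a b c eva evb evc eab ebc eac t1 t2 t3 t4.
         three_faces X v a b c eva evb evc eab ebc eac t1 t2 t3 \<and>
         is_tri X t4 a b c eab ebc eac \<and> qtris X q = {t1, t2, t3, t4}) \<and>
     \<comment> \<open>no two distinct 2-simplices with two or more edges in common\<close>
     (\<forall>t1\<in>Ts X. \<forall>t2\<in>Ts X. t1 \<noteq> t2 \<longrightarrow> card (tedges X t1 \<inter> tedges X t2) \<le> 1) \<and>
     \<comment> \<open>local finiteness\<close>
     (\<forall>v\<in>Vs X. finite {e\<in>Es X. v \<in> ends X e} \<and> finite {t\<in>Ts X. v \<in> tri_verts X t}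
                 \<and> finite {q\<in>Qs X. v \<in> tet_verts X q})"

definition three_flag :: "('v,'e,'t,'q) qcomplex \<Rightarrow> bool" where
  "three_flag X \<longleftrightarrow>
     (\<forall>v a b c eva evb evc eab ebc eac t1 t2 t3.
        three_faces X v a b c eva evb evc eab ebc eac t1 t2 t3 \<longrightarrow>
        (\<exists>q\<in>Qs X. \<exists>t4. is_tri X t4 a b c eab ebc eac \<and> qtris X q = {t1, t2, t3, t4}))"

text \<open>A dart (e,a,b) traverses edge e from a to b.\<close>
fun epath :: "('v,'e,'t,'q) qcomplex \<Rightarrow> 'v \<Rightarrow> 'v \<Rightarrow> ('e \<times> 'v \<times> 'v) list \<Rightarrow> bool" where
  "epath X x y [] \<longleftrightarrow> x = y \<and> x \<in> Vs X"
| "epath X x y ((e, a, b) # ds) \<longleftrightarrow> e \<in> Es X \<and> ends X e = {a, b} \<and> a = x \<and> epath X b y ds"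

inductive hstep :: "('v,'e,'t,'q) qcomplex \<Rightarrow> ('e \<times> 'v \<times> 'v) list \<Rightarrow> ('e \<times> 'v \<times> 'v) list \<Rightarrow> bool"
  for X where
  spur: "e \<in> Es X \<Longrightarrow> ends X e = {a, b} \<Longrightarrow>
           hstep X (p @ [(e, a, b), (e, b, a)] @ q) (p @ q)"
| tri: "is_tri X t a b c e1 e2 e3 \<Longrightarrow>
           hstep X (p @ [(e1, a, b), (e2, b, c)] @ q) (p @ [(e3, a, c)] @ q)"

definition homotopic :: "('v,'e,'t,'q) qcomplex \<Rightarrow> ('e \<times> 'v \<times> 'v) list \<Rightarrow> ('e \<times> 'v \<times> 'v) list \<Rightarrow> bool" where
  "homotopic X = (sup (hstep X) (hstep X)\<inverse>\<inverse>)\<^sup>*\<^sup>*"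

definition simply_connected :: "('v,'e,'t,'q) qcomplex \<Rightarrow> bool" where
  "simply_connected X \<longleftrightarrow>
     Vs X \<noteq> {} \<and>
     (\<forall>x\<in>Vs X. \<forall>y\<in>Vs X. \<exists>ds. epath X x y ds) \<and>
     (\<forall>x ds. epath X x x ds \<longrightarrow> homotopic X ds [])"

text \<open>Link of v: vertices are edges at v, two of them are adjacent iff they are
  two edges of a common 2-simplex (the corresponding corner at v).\<close>
definition link_adj :: "('v,'e,'t,'q) qcomplex \<Rightarrow> 'v \<Rightarrow> 'e \<Rightarrow> 'e \<Rightarrow> bool" where
  "link_adj X v e1 e2 \<longleftrightarrow> e1 \<in> Es X \<and> e2 \<in> Es X \<and> v \<in> ends X e1 \<and> v \<in> ends X e2 \<and>
     e1 \<noteq> e2 \<and> (\<exists>t\<in>Ts X. e1 \<in> tedges X t \<and> e2 \<in> tedges X t)"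

text \<open>The 2-simplex whose corner at v is the link edge between e1 and e2
  (unique in a quasi-simplicial complex).\<close>
definition corner_tri :: "('v,'e,'t,'q) qcomplex \<Rightarrow> 'e \<Rightarrow> 'e \<Rightarrow> 't" where
  "corner_tri X e1 e2 = (THE t. t \<in> Ts X \<and> e1 \<in> tedges X t \<and> e2 \<in> tedges X t)"

text \<open>Weight of a link edge; w t v is the weight of the corner of t at v.\<close>
definition lw :: "('v,'e,'t,'q) qcomplex \<Rightarrow> ('t \<Rightarrow> 'v \<Rightarrow> real) \<Rightarrow> 'v \<Rightarrow> 'e \<Rightarrow> 'e \<Rightarrow> real" where
  "lw X w v e1 e2 = w (corner_tri X e1 e2) v"

definition weak_triangle_ineq :: "('v,'e,'t,'q) qcomplex \<Rightarrow> ('t \<Rightarrow> 'v \<Rightarrow> real) \<Rightarrow> bool" where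
  "weak_triangle_ineq X w \<longleftrightarrow>
     (\<forall>v\<in>Vs X. \<forall>e1 e2 e3. link_adj X v e1 e2 \<and> link_adj X v e2 e3 \<and> link_adj X v e1 e3 \<longrightarrow>
        lw X w v e1 e3 \<le> lw X w v e1 e2 + lw X w v e2 e3)"

text \<open>A 2-full cycle in lk(v), given by its cyclic list of link vertices.\<close>
definition two_full_cycle :: "('v,'e,'t,'q) qcomplex \<Rightarrow> 'v \<Rightarrow> 'e list \<Rightarrow> bool" where
  "two_full_cycle X v es \<longleftrightarrow>
     v \<in> Vs X \<and> length es > 3 \<and> distinct es \<and>
     (\<forall>i<length es. link_adj X v (es ! i) (es ! ((i + 1) mod length es))) \<and>
     (\<forall>i<length es. \<not> link_adj X v (es ! i) (es ! ((i + 2) mod length es)))"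

definition cycle_length :: "('v,'e,'t,'q) qcomplex \<Rightarrow> ('t \<Rightarrow> 'v \<Rightarrow> real) \<Rightarrow> 'v \<Rightarrow> 'e list \<Rightarrow> real" where
  "cycle_length X w v es = (\<Sum>i<length es. lw X w v (es ! i) (es ! ((i + 1) mod length es)))"

definition corners :: "('v,'e,'t,'q) qcomplex \<Rightarrow> ('t \<times> 'v) set" where
  "corners X = {(t, v). t \<in> Ts X \<and> v \<in> tri_verts X t}"

definition angled_complex :: "('v,'e,'t,'q) qcomplex \<Rightarrow> ('t \<Rightarrow> 'v \<Rightarrow> real) \<Rightarrow> bool" where
  "angled_complex X w \<longleftrightarrow>
     quasi_simplicial X \<and>
     (\<forall>(t, v)\<in>corners X. w t v \<ge> 0) \<and>
     finite ((\<lambda>(t, v). w t v) ` corners X) \<and>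
     weak_triangle_ineq X w"

definition locally_2pi_large :: "('v,'e,'t,'q) qcomplex \<Rightarrow> ('t \<Rightarrow> 'v \<Rightarrow> real) \<Rightarrow> bool" where
  "locally_2pi_large X w \<longleftrightarrow>
     (\<forall>v es. two_full_cycle X v es \<longrightarrow> cycle_length X w v es \<ge> 2 * pi)"

definition strictly_systolic_angled :: "('v,'e,'t,'q) qcomplex \<Rightarrow> ('t \<Rightarrow> 'v \<Rightarrow> real) \<Rightarrow> bool" where
  "strictly_systolic_angled X w \<longleftrightarrow>
     angled_complex X w \<and> simply_connected X \<and> locally_2pi_large X w \<and> three_flag X \<and>
     (\<forall>t\<in>Ts X. (\<Sum>v\<in>tri_verts X t. w t v) < pi)"

text \<open>A piecewise Euclidean metric on the 2-skeleton is given by edge lengths such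
  that every 2-simplex is a nondegenerate Euclidean triangle; finitely many
  isometry classes of simplices amounts to finitely many edge lengths.\<close>
definition pe_metric :: "('v,'e,'t,'q) qcomplex \<Rightarrow> ('e \<Rightarrow> real) \<Rightarrow> bool" where
  "pe_metric X len \<longleftrightarrow>
     (\<forall>e\<in>Es X. len e > 0) \<and> finite (len ` Es X) \<and>
     (\<forall>t\<in>Ts X. \<forall>e\<in>tedges X t. 2 * len e < (\<Sum>e'\<in>tedges X t. len e'))"

text \<open>Euclidean angle of the corner of t at v (law of cosines).\<close>
definition euclid_angle :: "('v,'e,'t,'q) qcomplex \<Rightarrow> ('e \<Rightarrow> real) \<Rightarrow> 't \<Rightarrow> 'v \<Rightarrow> real" where
  "euclid_angle X len t v =
     (let adj = {e\<in>tedges X t. v \<in> ends X e};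
          opp = (THE e. e \<in> tedges X t \<and> v \<notin> ends X e)
      in arccos (((\<Sum>e\<in>adj. (len e)\<^sup>2) - (len opp)\<^sup>2) / (2 * (\<Prod>e\<in>adj. len e))))"

definition metrically_strictly_systolic :: "('v,'e,'t,'q) qcomplex \<Rightarrow> ('e \<Rightarrow> real) \<Rightarrow> bool" where
  "metrically_strictly_systolic X len \<longleftrightarrow>
     quasi_simplicial X \<and> simply_connected X \<and> three_flag X \<and> pe_metric X len \<and>
     weak_triangle_ineq X (euclid_angle X len) \<and>
     (\<forall>v es. two_full_cycle X v es \<longrightarrow> cycle_length X (euclid_angle X len) v es > 2 * pi)"

end

theory Submission
  imports Defs
begin

(* The Euclidean angles take only finitely many values, all in (0, pi), and the three
   angles of each 2-simplex add up to pi.  Finitely many positive values force a gap: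
   there is m > 2 pi with every 2-full cycle of angular length > 2 pi having length >= m
   (short cycles have lengths in a finite set, long ones are long because every angle
   is at least the smallest one).
   Multiplying all angles by 2 pi / m < 1 keeps the weak triangle inequality, makes
   2-full cycles have length >= 2 pi and every 2-simplex have weight sum < pi. *)

definition tri_angle :: "real \<Rightarrow> real \<Rightarrow> real \<Rightarrow> real" where
  "tri_angle x y z = arccos ((x\<^sup>2 + y\<^sup>2 - z\<^sup>2) / (2 * (x * y)))"

lemma tri_angle_commute: "tri_angle x y z = tri_angle y x z"
  unfolding tri_angle_def by (simp add: ac_simps)

lemma triangle_cos_bounds:
  fixes x y z :: real
  assumes "0 < x" "0 < y" "0 < z" "z < x + y" "x < y + z" "y < x + z"
  shows "-1 < (x\<^sup>2 + y\<^sup>2 - z\<^sup>2) / (2 * (x * y))" "(x\<^sup>2 + y\<^sup>2 - z\<^sup>2) / (2 * (x * y)) < 1"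
proof -
  have "0 < (z - x + y) * (z + x - y)" "0 < (x + y - z) * (x + y + z)"
    using assms by (intro mult_pos_pos; simp)+
  then show "-1 < (x\<^sup>2 + y\<^sup>2 - z\<^sup>2) / (2 * (x * y))" "(x\<^sup>2 + y\<^sup>2 - z\<^sup>2) / (2 * (x * y)) < 1"
    using assms by (simp_all add: divide_simps power2_eq_square algebra_simps)
qed

lemma tri_angle_bounds:
  fixes x y z :: real
  assumes "0 < x" "0 < y" "0 < z" "z < x + y" "x < y + z" "y < x + z"
  shows "0 < tri_angle x y z" "tri_angle x y z < pi"
  unfolding tri_angle_def using triangle_cos_bounds[OF assms] arccos_lt_bounded by auto

\<comment> \<open>The radicand is Heron's product, sixteen times the squared area.\<close>
lemma tri_angle_cos_sin:
  fixes x y z :: real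
  assumes "0 < x" "0 < y" "0 < z" "z < x + y" "x < y + z" "y < x + z"
  shows "cos (tri_angle x y z) = (x\<^sup>2 + y\<^sup>2 - z\<^sup>2) / (2 * (x * y))"
    and "sin (tri_angle x y z) =
      sqrt ((x + y + z) * (- x + y + z) * (x - y + z) * (x + y - z)) / (2 * (x * y))"
proof -
  let ?c = "(x\<^sup>2 + y\<^sup>2 - z\<^sup>2) / (2 * (x * y))"
  have c: "-1 \<le> ?c" "?c \<le> 1" using triangle_cos_bounds[OF assms] by simp_all
  show "cos (tri_angle x y z) = ?c" unfolding tri_angle_def using c by simp
  have "1 - ?c\<^sup>2 = (x + y + z) * (- x + y + z) * (x - y + z) * (x + y - z) / (2 * (x * y))\<^sup>2"
    using assms by (simp add: field_simps power2_eq_square)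
  then show "sin (tri_angle x y z) =
      sqrt ((x + y + z) * (- x + y + z) * (x - y + z) * (x + y - z)) / (2 * (x * y))"
    unfolding tri_angle_def sin_arccos[OF c] using assms by (simp add: real_sqrt_divide real_sqrt_mult)
qed

lemma tri_angle_sum:
  fixes p q r :: real
  assumes p: "0 < p" and q: "0 < q" and r: "0 < r"
    and "p < q + r" "q < p + r" "r < p + q"
  shows "tri_angle q r p + tri_angle p r q + tri_angle p q r = pi"
proof -
  define H where "H = (p + q + r) * (- p + q + r) * (p - q + r) * (p + q - r)"
  have "0 < H" unfolding H_def using assms by (intro mult_pos_pos) auto
  define K where "K = sqrt H"
  have K_pos: "0 < K" and KK: "K * K = H" using \<open>0 < H\<close> K_def by simp_all
  have heron_sym: "(q + r + p) * (- q + r + p) * (q - r + p) * (q + r - p) = H"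
    "(p + r + q) * (- p + r + q) * (p - r + q) * (p + r - q) = H"
    unfolding H_def by (simp_all add: algebra_simps)
  have qrp: "cos (tri_angle q r p) = (q\<^sup>2 + r\<^sup>2 - p\<^sup>2) / (2 * (q * r))"
    "sin (tri_angle q r p) = K / (2 * (q * r))"
    using tri_angle_cos_sin[of q r p] assms unfolding heron_sym K_def by auto
  have prq: "cos (tri_angle p r q) = (p\<^sup>2 + r\<^sup>2 - q\<^sup>2) / (2 * (p * r))"
    "sin (tri_angle p r q) = K / (2 * (p * r))"
    using tri_angle_cos_sin[of p r q] assms unfolding heron_sym K_def by auto
  define s where "s = tri_angle q r p + tri_angle p r q"
  have sin_s: "sin s = K / (2 * (p * q))"
    unfolding s_def sin_add qrp prq using assms by (simp add: field_simps power2_eq_square)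
  have cos_s: "cos s = - ((p\<^sup>2 + q\<^sup>2 - r\<^sup>2) / (2 * (p * q)))"
    unfolding s_def cos_add qrp prq using assms
    by (simp add: field_simps power2_eq_square KK) (simp add: H_def algebra_simps)
  have "0 \<le> s" "s \<le> 2 * pi"
    unfolding s_def using tri_angle_bounds[of q r p] tri_angle_bounds[of p r q] assms by auto
  have "s \<le> pi"
  proof (rule ccontr)
    assume "\<not> s \<le> pi"
    then have "0 \<le> sin (s - pi)" using \<open>s \<le> 2 * pi\<close> by (intro sin_ge_zero) auto
    then show False using sin_s K_pos p q by (simp add: sin_diff divide_simps)
  qed
  have "s = arccos (cos s)" using \<open>0 \<le> s\<close> \<open>s \<le> pi\<close> by (simp add: arccos_cos)
  also have "\<dots> = pi - tri_angle p q r"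
    unfolding cos_s tri_angle_def using triangle_cos_bounds[of p q r] assms
    by (simp add: arccos_minus)
  finally show ?thesis unfolding s_def by simp
qed

lemma sum_list_gap_above:
  fixes A :: "real set" and c :: real
  assumes "finite A" and "\<And>a. a \<in> A \<Longrightarrow> 0 < a"
  shows "\<exists>m > c. \<forall>xs. set xs \<subseteq> A \<longrightarrow> c < sum_list xs \<longrightarrow> m \<le> sum_list xs"
proof -
  define amin where "amin = Min (insert 1 A)"
  have amin_pos: "0 < amin" unfolding amin_def using assms by auto
  have amin_le: "amin \<le> a" if "a \<in> A" for a unfolding amin_def using assms(1) that by simp
  have length_bound: "real (length xs) * amin \<le> sum_list xs" if "set xs \<subseteq> A" for xs
    using that by (induction xs) (auto simp: algebra_simps intro: add_mono amin_le)
  obtain N :: nat where "(c + 1) / amin < N" using reals_Archimedean2 by blast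
  then have N: "c + 1 < real N * amin" using amin_pos by (simp add: field_simps)
  define S where "S = sum_list ` {xs. set xs \<subseteq> A \<and> length xs \<le> N}"
  have "finite S" unfolding S_def using finite_lists_length_le[OF assms(1)] by simp
  then have fin: "finite (insert (c + 1) {s \<in> S. c < s})" by simp
  define m where "m = Min (insert (c + 1) {s \<in> S. c < s})"
  have "c < m" unfolding m_def using fin by (subst Min_gr_iff) auto
  moreover have "m \<le> sum_list xs" if xs: "set xs \<subseteq> A" "c < sum_list xs" for xs
  proof (cases "length xs \<le> N")
    case True
    then have "sum_list xs \<in> S" unfolding S_def using xs by auto
    then show ?thesis unfolding m_def using fin xs by (intro Min_le) auto
  next
    case False
    then have "real N * amin \<le> real (length xs) * amin" using amin_pos by simp
    moreover have "m \<le> c + 1" unfolding m_def using fin by simp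
    ultimately show ?thesis using N length_bound[OF xs(1)] by linarith
  qed
  ultimately show ?thesis by blast
qed

lemma is_tri_edges_distinct:
  assumes "is_tri X t a b c e1 e2 e3"
  shows "e1 \<noteq> e2" "e2 \<noteq> e3" "e1 \<noteq> e3"
  using assms unfolding is_tri_def by (auto simp: doubleton_eq_iff)

lemma is_tri_swap:
  assumes "is_tri X t a b c e1 e2 e3"
  shows "is_tri X t b a c e1 e3 e2" "is_tri X t c b a e2 e1 e3"
  using assms unfolding is_tri_def by (auto simp: insert_commute)

lemma tri_verts_is_tri:
  assumes "is_tri X t a b c e1 e2 e3"
  shows "tri_verts X t = {a, b, c}"
  using assms unfolding is_tri_def tri_verts_def by auto

lemma quasi_simplicial_is_tri:
  assumes "quasi_simplicial X" "t \<in> Ts X"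
  obtains a b c e1 e2 e3 where "is_tri X t a b c e1 e2 e3"
  using assms unfolding quasi_simplicial_def by blast

lemma corners_is_tri:
  assumes "quasi_simplicial X" "(t, v) \<in> corners X"
  obtains b c e1 e2 e3 where "is_tri X t v b c e1 e2 e3"
proof -
  have t: "t \<in> Ts X" and v: "v \<in> tri_verts X t" using assms(2) unfolding corners_def by auto
  obtain a b c e1 e2 e3 where tr: "is_tri X t a b c e1 e2 e3"
    using quasi_simplicial_is_tri[OF assms(1) t] .
  have "v = a \<or> v = b \<or> v = c" using v tri_verts_is_tri[OF tr] by auto
  then show ?thesis using that tr is_tri_swap[OF tr] by blast
qed

lemma link_adj_corner_tri:
  assumes "quasi_simplicial X" "link_adj X v e1 e2"
  shows "(corner_tri X e1 e2, v) \<in> corners X"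
proof -
  obtain t where t: "t \<in> Ts X" "e1 \<in> tedges X t" "e2 \<in> tedges X t"
    and "e1 \<noteq> e2" and "v \<in> ends X e1"
    using assms(2) unfolding link_adj_def by blast
  have "corner_tri X e1 e2 = t"
    unfolding corner_tri_def
  proof (rule the_equality)
    fix t' assume t': "t' \<in> Ts X \<and> e1 \<in> tedges X t' \<and> e2 \<in> tedges X t'"
    show "t' = t"
    proof (rule ccontr)
      assume "t' \<noteq> t"
      then have "card (tedges X t' \<inter> tedges X t) \<le> 1"
        using assms(1) t' t(1) unfolding quasi_simplicial_def by blast
      moreover obtain a b c f1 f2 f3 where "is_tri X t a b c f1 f2 f3"
        using quasi_simplicial_is_tri[OF assms(1) t(1)] .
      then have "finite (tedges X t)" unfolding is_tri_def by simp
      then have "card {e1, e2} \<le> card (tedges X t' \<inter> tedges X t)"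
        using t' t by (intro card_mono) auto
      ultimately show False using \<open>e1 \<noteq> e2\<close> by simp
    qed
  qed (use t in simp)
  moreover have "v \<in> tri_verts X t" using t \<open>v \<in> ends X e1\<close> unfolding tri_verts_def by auto
  ultimately show ?thesis using t unfolding corners_def by auto
qed

lemma pe_metric_is_tri:
  assumes "pe_metric X len" "is_tri X t a b c e1 e2 e3"
  shows "0 < len e1" "0 < len e2" "0 < len e3"
    "len e1 < len e2 + len e3" "len e2 < len e1 + len e3" "len e3 < len e1 + len e2"
proof -
  have T: "t \<in> Ts X" "tedges X t = {e1, e2, e3}" "e1 \<in> Es X" "e2 \<in> Es X" "e3 \<in> Es X"
    using assms(2) unfolding is_tri_def by auto
  have "(\<Sum>e\<in>tedges X t. len e) = len e1 + len e2 + len e3"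
    using is_tri_edges_distinct[OF assms(2)] T(2) by simp
  then have "\<forall>e\<in>{e1, e2, e3}. 2 * len e < len e1 + len e2 + len e3"
    using assms(1) T(1,2) unfolding pe_metric_def by metis
  then show "len e1 < len e2 + len e3" "len e2 < len e1 + len e3" "len e3 < len e1 + len e2"
    by auto
  show "0 < len e1" "0 < len e2" "0 < len e3" using assms(1) T unfolding pe_metric_def by auto
qed

lemma euclid_angle_is_tri:
  assumes "is_tri X t a b c e1 e2 e3"
  shows "euclid_angle X len t a = tri_angle (len e1) (len e3) (len e2)"
proof -
  have adj: "{e\<in>tedges X t. a \<in> ends X e} = {e1, e3}"
    using assms unfolding is_tri_def by auto
  have opp: "(THE e. e \<in> tedges X t \<and> a \<notin> ends X e) = e2"
    using assms unfolding is_tri_def by (intro the_equality) auto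
  show ?thesis
    unfolding euclid_angle_def tri_angle_def Let_def adj opp
    using is_tri_edges_distinct[OF assms] by simp
qed

lemma euclid_angle_bounds:
  assumes "quasi_simplicial X" "pe_metric X len" "(t, v) \<in> corners X"
  shows "0 < euclid_angle X len t v" "euclid_angle X len t v < pi"
proof -
  obtain b c e1 e2 e3 where tr: "is_tri X t v b c e1 e2 e3"
    using corners_is_tri[OF assms(1,3)] .
  show "0 < euclid_angle X len t v" "euclid_angle X len t v < pi"
    unfolding euclid_angle_is_tri[OF tr]
    using tri_angle_bounds pe_metric_is_tri[OF assms(2) tr] by auto
qed

lemma finite_euclid_angle_values:
  assumes "quasi_simplicial X" "pe_metric X len"
  shows "finite ((\<lambda>(t, v). euclid_angle X len t v) ` corners X)"
proof (rule finite_subset)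
  let ?L = "len ` Es X"
  show "(\<lambda>(t, v). euclid_angle X len t v) ` corners X
      \<subseteq> (\<lambda>(x, y, z). tri_angle x y z) ` (?L \<times> ?L \<times> ?L)"
  proof clarify
    fix t v assume "(t, v) \<in> corners X"
    then obtain b c e1 e2 e3 where tr: "is_tri X t v b c e1 e2 e3"
      using corners_is_tri[OF assms(1)] by blast
    then have "(len e1, len e3, len e2) \<in> ?L \<times> ?L \<times> ?L" unfolding is_tri_def by auto
    then show "euclid_angle X len t v \<in> (\<lambda>(x, y, z). tri_angle x y z) ` (?L \<times> ?L \<times> ?L)"
      unfolding euclid_angle_is_tri[OF tr] by force
  qed
  show "finite ((\<lambda>(x, y, z). tri_angle x y z) ` (?L \<times> ?L \<times> ?L))"
    using assms(2) unfolding pe_metric_def by simp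
qed

lemma euclid_angle_sum:
  assumes "quasi_simplicial X" "pe_metric X len" "t \<in> Ts X"
  shows "(\<Sum>v\<in>tri_verts X t. euclid_angle X len t v) = pi"
proof -
  obtain a b c e1 e2 e3 where tr: "is_tri X t a b c e1 e2 e3"
    using quasi_simplicial_is_tri[OF assms(1,3)] .
  have "a \<noteq> b" "b \<noteq> c" "a \<noteq> c" using tr unfolding is_tri_def by auto
  then have "(\<Sum>v\<in>tri_verts X t. euclid_angle X len t v) =
      euclid_angle X len t a + euclid_angle X len t b + euclid_angle X len t c"
    using tri_verts_is_tri[OF tr] by simp
  also have "\<dots> = pi"
    unfolding euclid_angle_is_tri[OF tr] euclid_angle_is_tri[OF is_tri_swap(1)[OF tr]]
      euclid_angle_is_tri[OF is_tri_swap(2)[OF tr]]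
    using tri_angle_sum[of "len e2" "len e3" "len e1"] pe_metric_is_tri[OF assms(2) tr]
    by (simp add: tri_angle_commute ac_simps)
  finally show ?thesis .
qed

lemma two_full_cycle_length_gap:
  assumes "quasi_simplicial X" "pe_metric X len"
  shows "\<exists>m > c. \<forall>v es. two_full_cycle X v es \<longrightarrow> c < cycle_length X (euclid_angle X len) v es
           \<longrightarrow> m \<le> cycle_length X (euclid_angle X len) v es"
proof -
  let ?A = "(\<lambda>(t, v). euclid_angle X len t v) ` corners X"
  have "\<exists>m > c. \<forall>xs. set xs \<subseteq> ?A \<longrightarrow> c < sum_list xs \<longrightarrow> m \<le> sum_list xs"
    using finite_euclid_angle_values[OF assms] euclid_angle_bounds(1)[OF assms]
    by (intro sum_list_gap_above) auto
  moreover have "\<exists>xs. set xs \<subseteq> ?A \<and> cycle_length X (euclid_angle X len) v es = sum_list xs"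
    if "two_full_cycle X v es" for v es
  proof -
    let ?f = "\<lambda>i. lw X (euclid_angle X len) v (es ! i) (es ! ((i + 1) mod length es))"
    have "?f i \<in> ?A" if "i < length es" for i
      using link_adj_corner_tri[OF assms(1)] \<open>two_full_cycle X v es\<close> that
      unfolding two_full_cycle_def lw_def by force
    moreover have "cycle_length X (euclid_angle X len) v es = sum_list (map ?f [0..<length es])"
      unfolding cycle_length_def by (simp add: interv_sum_list_conv_sum_set_nat lessThan_atLeast0)
    ultimately show ?thesis by (intro exI[of _ "map ?f [0..<length es]"]) auto
  qed
  ultimately show ?thesis by metis
qed

lemma lw_scale: "lw X (\<lambda>t v. k * w t v) v e1 e2 = k * lw X w v e1 e2"
  unfolding lw_def by simp

lemma cycle_length_scale: "cycle_length X (\<lambda>t v. k * w t v) v es = k * cycle_length X w v es"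
  unfolding cycle_length_def lw_scale by (simp add: sum_distrib_left)

lemma weak_triangle_ineq_scale:
  assumes "weak_triangle_ineq X w" "0 \<le> k"
  shows "weak_triangle_ineq X (\<lambda>t v. k * w t v)"
  using assms unfolding weak_triangle_ineq_def lw_scale
  by (metis distrib_left mult_left_mono)

theorem proposition2p13:
  fixes X :: "('v, 'e, 't, 'q) qcomplex" and len :: "'e \<Rightarrow> real"
  assumes "metrically_strictly_systolic X len"
  shows "\<exists>w :: 't \<Rightarrow> 'v \<Rightarrow> real. strictly_systolic_angled X w"
proof -
  let ?ang = "euclid_angle X len"
  have qs: "quasi_simplicial X" and pe: "pe_metric X len"
    using assms unfolding metrically_strictly_systolic_def by auto
  obtain m where "2 * pi < m"
    and gap: "\<And>v es. two_full_cycle X v es \<Longrightarrow> m \<le> cycle_length X ?ang v es"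
    using two_full_cycle_length_gap[OF qs pe, of "2 * pi"] assms
    unfolding metrically_strictly_systolic_def by blast
  define k where "k = 2 * pi / m"
  have "0 < m" using \<open>2 * pi < m\<close> pi_gt_zero by linarith
  then have "0 < k" "k < 1" "k * m = 2 * pi"
    unfolding k_def using \<open>2 * pi < m\<close> by (simp_all add: field_simps)
  have "2 * pi \<le> cycle_length X (\<lambda>t v. k * ?ang t v) v es" if "two_full_cycle X v es" for v es
    using mult_left_mono[OF gap[OF that], of k] \<open>0 < k\<close> \<open>k * m = 2 * pi\<close>
    by (simp add: cycle_length_scale)
  moreover have "finite ((\<lambda>(t, v). k * ?ang t v) ` corners X)"
    using finite_imageI[OF finite_euclid_angle_values[OF qs pe], of "(*) k"]
    by (simp add: image_image case_prod_beta)
  ultimately have "strictly_systolic_angled X (\<lambda>t v. k * ?ang t v)"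
    unfolding strictly_systolic_angled_def angled_complex_def locally_2pi_large_def
    using assms \<open>0 < k\<close> \<open>k < 1\<close> euclid_angle_bounds(1)[OF qs pe] euclid_angle_sum[OF qs pe]
    by (auto simp: metrically_strictly_systolic_def weak_triangle_ineq_scale
        sum_distrib_left[symmetric] less_imp_le)
  then show ?thesis by blast
qed

end
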